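(* Let $0\leq m\leq M$ be integers, $p\in(0,1)$, and define for $n\in\mathbb{N}$ $$f_{S,d}(n)=2n\sum_{k=m}^{M}\binom{n-1}{k}p^k(1-p)^{n-1-k}$$ (with $f_{S,d}(0)=0$). Then $f_{S,d}$ is non-decreasing on the integers of $\left[0,\frac{m+1}{p}-1\right]$ and non-increasing on the integers of $\left[\frac{M+1}{p}-1,+\infty\right)$.
   Context: Here $S=[m,M]$, $d$ is a distance threshold, and $p=p(d)\in(0,1)$ is the probability that two distinct uniformly random points of the unit torus are at distance at most $d$ (equal to $\pi d^2$ for $d\leq\frac12$). Binomial coefficients follow the convention $\binom{a}{k}=0$ for $k>a\geq0$. The quantity $f_{S,d}(n)$ is the expected order at the next step of the redistributed model when the current order is $n$. *)

theory Defs
  imports Complex_Main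
begin

definition f_Sd :: "nat \<Rightarrow> nat \<Rightarrow> real \<Rightarrow> nat \<Rightarrow> real" where
  "f_Sd m M p n = (if n = 0 then 0 else
     2 * real n * (\<Sum>k = m..M. real ((n - 1) choose k) * p ^ k * (1 - p) ^ (n - 1 - k)))"

end

theory Submission
  imports Defs
begin

(* Write b(n, j) for the binomial(n, p) probabilities. Absorption j C(n, j) = n C(n-1, j-1)
   turns f(n) into (2/p) sum_{j=m+1}^{M+1} j b(n, j). Pascal's rule
     b(n+1, j+1) - b(n, j+1) = p (b(n, j) - b(n, j+1)),
   summed by parts, makes the increment of this partial moment from n to n+1 equal to
     p (m (b(n, m) - b(n, M+1)) + sum_{j=m}^{M} (b(n, j) - b(n, M+1))).
   As b(n, j+1) / b(n, j) = (n-j) p / ((j+1)(1-p)), the sequence b(n, .) increases while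
   j+1 <= (n+1) p and decreases afterwards, so all these differences are >= 0 when
   (n+1) p <= m+1 and <= 0 when (n+1) p >= M+1. *)


definition binom_prob :: "real \<Rightarrow> nat \<Rightarrow> nat \<Rightarrow> real" where
  "binom_prob p n j = real (n choose j) * p ^ j * (1 - p) ^ (n - j)"

definition binom_moment :: "real \<Rightarrow> nat \<Rightarrow> nat \<Rightarrow> nat \<Rightarrow> real" where
  "binom_moment p a b n = (\<Sum>j = a..b. real j * binom_prob p n j)"

lemma binom_prob_nonneg: "0 \<le> p \<Longrightarrow> p \<le> 1 \<Longrightarrow> 0 \<le> binom_prob p n j"
  unfolding binom_prob_def by simp

lemma binom_prob_eq_0: "n < j \<Longrightarrow> binom_prob p n j = 0"
  unfolding binom_prob_def by simp

lemma binom_prob_Suc_Suc_diff: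
  "binom_prob p (Suc n) (Suc j) - binom_prob p n (Suc j)
     = p * (binom_prob p n j - binom_prob p n (Suc j))"
proof (cases "j < n")
  case True
  then have power: "(1 - p) ^ (n - j) = (1 - p) * (1 - p) ^ (n - Suc j)"
    by (simp flip: power_Suc add: Suc_diff_Suc)
  show ?thesis
    unfolding binom_prob_def by (simp add: power algebra_simps)
next
  case False
  then show ?thesis
    by (simp add: binom_prob_def algebra_simps)
qed

lemma Suc_mult_binom_prob_Suc_Suc:
  "real (Suc j) * binom_prob p (Suc n) (Suc j) = p * real (Suc n) * binom_prob p n j"
proof -
  have absorb: "real (Suc j) * real (Suc n choose Suc j) = real (Suc n) * real (n choose j)"
    by (metis Suc_times_binomial of_nat_mult)
  have "real (Suc j) * binom_prob p (Suc n) (Suc j)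
      = (real (Suc j) * real (Suc n choose Suc j)) * p * p ^ j * (1 - p) ^ (n - j)"
    unfolding binom_prob_def by (simp add: mult_ac)
  then show ?thesis
    unfolding absorb binom_prob_def by (simp add: mult_ac)
qed

lemma f_Sd_eq_binom_moment:
  assumes "0 < p"
  shows "f_Sd m M p n = 2 / p * binom_moment p (Suc m) (Suc M) n"
proof (cases n)
  case 0
  then show ?thesis
    by (simp add: f_Sd_def binom_moment_def binom_prob_eq_0)
next
  case (Suc n')
  have "binom_moment p (Suc m) (Suc M) n
      = (\<Sum>k = m..M. real (Suc k) * binom_prob p n (Suc k))"
    unfolding binom_moment_def sum.shift_bounds_cl_Suc_ivl ..
  also have "\<dots> = p * real n * (\<Sum>k = m..M. binom_prob p n' k)"
    unfolding Suc Suc_mult_binom_prob_Suc_Suc by (simp add: sum_distrib_left mult.assoc)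
  finally have "binom_moment p (Suc m) (Suc M) n
      = p * real n * (\<Sum>k = m..M. binom_prob p n' k)" .
  then show ?thesis
    using assms Suc by (simp add: f_Sd_def binom_prob_def)
qed

lemma binom_moment_Suc_diff:
  assumes "m \<le> M"
  shows "binom_moment p (Suc m) (Suc M) (Suc n) - binom_moment p (Suc m) (Suc M) n
       = p * (real m * (binom_prob p n m - binom_prob p n (Suc M))
              + (\<Sum>j = m..M. binom_prob p n j - binom_prob p n (Suc M)))"
  using assms
proof (induction M rule: dec_induct)
  case base
  have pascal: "binom_prob p (Suc n) (Suc m)
      = binom_prob p n (Suc m) + p * (binom_prob p n m - binom_prob p n (Suc m))"
    using binom_prob_Suc_Suc_diff[of p n m] by simp
  show ?case
    by (simp add: binom_moment_def pascal algebra_simps)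
next
  case (step M)
  let ?B = "binom_prob p n"
  let ?d = "?B (Suc M) - ?B (Suc (Suc M))"
  have pascal: "binom_prob p (Suc n) (Suc (Suc M)) = ?B (Suc (Suc M)) + p * ?d"
    using binom_prob_Suc_Suc_diff[of p n "Suc M"] by simp
  have "binom_moment p (Suc m) (Suc (Suc M)) (Suc n) - binom_moment p (Suc m) (Suc (Suc M)) n
      = (binom_moment p (Suc m) (Suc M) (Suc n) - binom_moment p (Suc m) (Suc M) n)
        + real (Suc (Suc M)) * p * ?d"
    using step.hyps by (simp add: binom_moment_def pascal algebra_simps)
  also have "\<dots> = p * (real m * (?B m - ?B (Suc M)) + (\<Sum>j = m..M. ?B j - ?B (Suc M))
                       + real (Suc (Suc M)) * ?d)"
    unfolding step.IH by (simp add: algebra_simps)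
  also have "(\<Sum>j = m..M. ?B j - ?B (Suc M))
      = (\<Sum>j = m..Suc M. ?B j - ?B (Suc (Suc M))) - (real M + 2 - real m) * ?d"
    using step.hyps by (simp add: sum_subtractf algebra_simps)
  finally show ?case
    by (simp add: algebra_simps)
qed

lemma binom_prob_Suc_ratio:
  assumes "j < n"
  shows "real (Suc j) * (1 - p) * binom_prob p n (Suc j) = real (n - j) * p * binom_prob p n j"
proof -
  have "(n choose Suc j) * Suc j = (n - j) * (n choose j)"
    using Suc_times_binomial_eq[of "n - 1" j] binomial_absorb_comp[of n j] assms by simp
  then have absorb: "real (Suc j) * real (n choose Suc j) = real (n - j) * real (n choose j)"
    by (metis of_nat_mult mult.commute)
  have power: "(1 - p) * (1 - p) ^ (n - Suc j) = (1 - p) ^ (n - j)"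
    using assms by (simp flip: power_Suc add: Suc_diff_Suc)
  have "real (Suc j) * (1 - p) * binom_prob p n (Suc j)
      = (real (Suc j) * real (n choose Suc j)) * p * p ^ j * ((1 - p) * (1 - p) ^ (n - Suc j))"
    unfolding binom_prob_def by (simp add: mult_ac)
  also have "\<dots> = real (n - j) * p * binom_prob p n j"
    unfolding absorb power binom_prob_def by (simp add: mult_ac)
  finally show ?thesis .
qed

lemma binom_prob_Suc_le:
  assumes "0 < p" "p < 1" "(real n + 1) * p \<le> real j + 1"
  shows "binom_prob p n (Suc j) \<le> binom_prob p n j"
proof (cases "j < n")
  case True
  have "real (n - j) * p \<le> real (Suc j) * (1 - p)"
    using True assms(3) by (simp add: algebra_simps)
  then have "real (Suc j) * (1 - p) * binom_prob p n (Suc j)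
      \<le> real (Suc j) * (1 - p) * binom_prob p n j"
    unfolding binom_prob_Suc_ratio[OF True]
    using assms by (intro mult_right_mono binom_prob_nonneg) auto
  then show ?thesis
    using assms by (simp add: mult_le_cancel_left_pos)
next
  case False
  then show ?thesis
    using assms by (simp add: binom_prob_eq_0 binom_prob_nonneg)
qed

lemma binom_prob_le_Suc:
  assumes "0 < p" "p < 1" "real j + 1 \<le> (real n + 1) * p"
  shows "binom_prob p n j \<le> binom_prob p n (Suc j)"
proof -
  have "(real n + 1) * p < real n + 1"
    using mult_strict_left_mono[OF assms(2), of "real n + 1"] by simp
  then have "real j < real n"
    using assms(3) by linarith
  then have "j < n"
    by simp
  have "real (Suc j) * (1 - p) \<le> real (n - j) * p"
    using \<open>j < n\<close> assms(3) by (simp add: algebra_simps)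
  then have "real (Suc j) * (1 - p) * binom_prob p n j
      \<le> real (Suc j) * (1 - p) * binom_prob p n (Suc j)"
    unfolding binom_prob_Suc_ratio[OF \<open>j < n\<close>]
    using assms by (intro mult_right_mono binom_prob_nonneg) auto
  then show ?thesis
    using assms by (simp add: mult_le_cancel_left_pos)
qed

lemma binom_moment_le_Suc:
  assumes "m \<le> M" "0 < p" "p < 1" "(real n + 1) * p \<le> real m + 1"
  shows "binom_moment p (Suc m) (Suc M) n \<le> binom_moment p (Suc m) (Suc M) (Suc n)"
proof -
  have step: "binom_prob p n (Suc i) \<le> binom_prob p n i" if "i \<in> {m..}" for i
    using that assms by (intro binom_prob_Suc_le) auto
  have "binom_prob p n (Suc M) \<le> binom_prob p n j" if "m \<le> j" "j \<le> Suc M" for j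
    using step that(2)
    by (rule lift_Suc_antimono_le_ivl[where N = "{m..}" and f = "binom_prob p n"]) (use that in auto)
  then have "0 \<le> real m * (binom_prob p n m - binom_prob p n (Suc M))
                 + (\<Sum>j = m..M. binom_prob p n j - binom_prob p n (Suc M))"
    using assms(1) by (intro add_nonneg_nonneg mult_nonneg_nonneg sum_nonneg) auto
  with assms(2)
  have "0 \<le> binom_moment p (Suc m) (Suc M) (Suc n) - binom_moment p (Suc m) (Suc M) n"
    unfolding binom_moment_Suc_diff[OF assms(1)] by simp
  then show ?thesis
    by simp
qed

lemma binom_moment_Suc_le:
  assumes "m \<le> M" "0 < p" "p < 1" "real M + 1 \<le> (real n + 1) * p"
  shows "binom_moment p (Suc m) (Suc M) (Suc n) \<le> binom_moment p (Suc m) (Suc M) n"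
proof -
  have step: "binom_prob p n i \<le> binom_prob p n (Suc i)" if "i \<in> {..M}" for i
    using that assms by (intro binom_prob_le_Suc) auto
  have "binom_prob p n j \<le> binom_prob p n (Suc M)" if "j \<le> Suc M" for j
    using step that
    by (rule lift_Suc_mono_le_ivl[where N = "{..M}" and f = "binom_prob p n"]) auto
  then have "real m * (binom_prob p n m - binom_prob p n (Suc M))
             + (\<Sum>j = m..M. binom_prob p n j - binom_prob p n (Suc M)) \<le> 0"
    using assms(1) by (intro add_nonpos_nonpos mult_nonneg_nonpos sum_nonpos) auto
  with assms(2)
  have "binom_moment p (Suc m) (Suc M) (Suc n) - binom_moment p (Suc m) (Suc M) n \<le> 0"
    unfolding binom_moment_Suc_diff[OF assms(1)] by (simp add: mult_nonneg_nonpos)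
  then show ?thesis
    by simp
qed

lemma f_Sd_le_Suc:
  assumes "m \<le> M" "0 < p" "p < 1" "real n + 1 \<le> (real m + 1) / p"
  shows "f_Sd m M p n \<le> f_Sd m M p (Suc n)"
proof -
  have "(real n + 1) * p \<le> real m + 1"
    using assms(2,4) by (simp add: pos_le_divide_eq)
  then show ?thesis
    using assms(1-3) by (simp add: f_Sd_eq_binom_moment divide_right_mono binom_moment_le_Suc)
qed

lemma f_Sd_Suc_le:
  assumes "m \<le> M" "0 < p" "p < 1" "(real M + 1) / p \<le> real n + 1"
  shows "f_Sd m M p (Suc n) \<le> f_Sd m M p n"
proof -
  have "real M + 1 \<le> (real n + 1) * p"
    using assms(2,4) by (simp add: pos_divide_le_eq)
  then show ?thesis
    using assms(1-3) by (simp add: f_Sd_eq_binom_moment divide_right_mono binom_moment_Suc_le)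
qed

theorem theorem9:
  fixes m M :: nat and p :: real
  assumes "m \<le> M" and "0 < p" and "p < 1"
  shows "(\<forall>a b :: nat. a \<le> b \<and> real b \<le> (real m + 1) / p - 1
            \<longrightarrow> f_Sd m M p a \<le> f_Sd m M p b)
       \<and> (\<forall>a b :: nat. (real M + 1) / p - 1 \<le> real a \<and> a \<le> b
            \<longrightarrow> f_Sd m M p b \<le> f_Sd m M p a)"
proof (intro conjI allI impI; elim conjE)
  fix a b :: nat
  assume "a \<le> b" "real b \<le> (real m + 1) / p - 1"
  then have "f_Sd m M p n \<le> f_Sd m M p (Suc n)" if "n \<in> {..<b}" for n
    using that assms by (intro f_Sd_le_Suc) auto
  then show "f_Sd m M p a \<le> f_Sd m M p b"
    using \<open>a \<le> b\<close>
    by (rule lift_Suc_mono_le_ivl[where N = "{..<b}" and f = "f_Sd m M p"]) auto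
next
  fix a b :: nat
  assume "(real M + 1) / p - 1 \<le> real a" "a \<le> b"
  then have "f_Sd m M p (Suc n) \<le> f_Sd m M p n" if "n \<in> {a..}" for n
    using that assms by (intro f_Sd_Suc_le) auto
  then show "f_Sd m M p b \<le> f_Sd m M p a"
    using \<open>a \<le> b\<close>
    by (rule lift_Suc_antimono_le_ivl[where N = "{a..}" and f = "f_Sd m M p"]) auto
qed

end
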